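(* Let $A$ and $B$ be $k$-algebras and $\tau\colon B\otimes A\to A\otimes B$ a twisting map. Equip $A$, $B$ and $A\otimes_\tau B$ with their cofinite topologies. Then the linear isomorphism $A\otimes^! B\to A\otimes_\tau B$ given by the identity on the underlying vector space $A\otimes B$ is continuous.
   Context: $k$ is a field (discrete topology). All algebras are unital associative. For an algebra $R$, $\mathcal F(R)$ is the set of two-sided ideals of finite codimension, and the cofinite topology on $R$ is the linear topology whose open subspaces are those containing some element of $\mathcal F(R)$. For linearly topologized spaces $E,F$, $E\otimes^!F$ is $E\otimes F$ with the linear topology whose open subspaces are those containing $E_0\otimes F+E\otimes F_0$ for some open subspaces $E_0\subseteq E$, $F_0\subseteq F$. A linear map $\tau\colon B\otimes A\to A\otimes B$ is a twisting map if the multiplication $m_\tau=(m_A\otimes m_B)\circ(\mathrm{id}_A\otimes\tau\otimes\mathrm{id}_B)$ on $A\otimes B$ is associative with identity $1_A\otimes 1_B$; the resulting algebra is the twisted tensor product $A\otimes_\tau B$, and $a\mapsto a\otimes 1$, $b\mapsto 1\otimes b$ are algebra homomorphisms into it. *)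

theory Defs
  imports Main "HOL.Vector_Spaces"
begin

definition k_algebra :: "('k::field \<Rightarrow> 'a::{ring,monoid_mult} \<Rightarrow> 'a) \<Rightarrow> bool" where
  "k_algebra sc \<longleftrightarrow> Vector_Spaces.vector_space sc \<and>
     (\<forall>c x y. sc c (x * y) = sc c x * y \<and> sc c (x * y) = x * sc c y)"

definition bilin ::
  "('k::field \<Rightarrow> 'a::ab_group_add \<Rightarrow> 'a) \<Rightarrow> ('k \<Rightarrow> 'b::ab_group_add \<Rightarrow> 'b) \<Rightarrow>
   ('k \<Rightarrow> 'c::ab_group_add \<Rightarrow> 'c) \<Rightarrow> ('a \<Rightarrow> 'b \<Rightarrow> 'c) \<Rightarrow> bool" where
  "bilin s1 s2 s3 f \<longleftrightarrow> (\<forall>x. Vector_Spaces.linear s2 s3 (f x)) \<and>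
                          (\<forall>y. Vector_Spaces.linear s1 s3 (\<lambda>x. f x y))"

(* Together these characterize A \<otimes> B up to
   unique isomorphism. *)
definition is_tensor_product ::
  "('k::field \<Rightarrow> 'a::ab_group_add \<Rightarrow> 'a) \<Rightarrow> ('k \<Rightarrow> 'b::ab_group_add \<Rightarrow> 'b) \<Rightarrow>
   ('k \<Rightarrow> 't::ab_group_add \<Rightarrow> 't) \<Rightarrow> ('a \<Rightarrow> 'b \<Rightarrow> 't) \<Rightarrow> bool" where
  "is_tensor_product sa sb st tp \<longleftrightarrow>
     Vector_Spaces.vector_space sa \<and> Vector_Spaces.vector_space sb \<and> Vector_Spaces.vector_space st \<and>
     bilin sa sb st tp \<and>
     module.span st {tp x y | x y. True} = UNIV \<and>
     (\<forall>f :: 'a \<Rightarrow> 'b \<Rightarrow> 'k. bilin sa sb (*) f \<longrightarrow>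
        (\<exists>g. Vector_Spaces.linear st (*) g \<and> (\<forall>x y. g (tp x y) = f x y)))"

definition tensor_map ::
  "('k::field \<Rightarrow> 't::ab_group_add \<Rightarrow> 't) \<Rightarrow> ('a \<Rightarrow> 'b \<Rightarrow> 't) \<Rightarrow>
   ('a \<Rightarrow> 'a) \<Rightarrow> ('b \<Rightarrow> 'b) \<Rightarrow> 't \<Rightarrow> 't" where
  "tensor_map st tp f g = (THE h. Vector_Spaces.linear st st h \<and>
                                  (\<forall>x y. h (tp x y) = tp (f x) (g y)))"

(* m is the multiplication m_tau = (m_A \<otimes> m_B) o (id \<otimes> tau \<otimes> id) on A \<otimes> B:
   bilinear, and m(a\<otimes>b, a'\<otimes>b') = (a\<cdot>_ \<otimes> _\<cdot>b')(tau(b\<otimes>a')) *)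
definition twisted_mult ::
  "('k::field \<Rightarrow> 'a::{ring,monoid_mult} \<Rightarrow> 'a) \<Rightarrow> ('k \<Rightarrow> 'b::{ring,monoid_mult} \<Rightarrow> 'b) \<Rightarrow>
   ('k \<Rightarrow> 't::ab_group_add \<Rightarrow> 't) \<Rightarrow> ('a \<Rightarrow> 'b \<Rightarrow> 't) \<Rightarrow>
   ('b \<Rightarrow> 'a \<Rightarrow> 's) \<Rightarrow> ('s \<Rightarrow> 't) \<Rightarrow> ('t \<Rightarrow> 't \<Rightarrow> 't) \<Rightarrow> bool" where
  "twisted_mult sa sb st tp tpBA \<tau> m \<longleftrightarrow>
     bilin st st st m \<and>
     (\<forall>a b a' b'. m (tp a b) (tp a' b') =
         tensor_map st tp (\<lambda>x. a * x) (\<lambda>y. y * b') (\<tau> (tpBA b a')))"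

definition twisting_map ::
  "('k::field \<Rightarrow> 'a::{ring,monoid_mult} \<Rightarrow> 'a) \<Rightarrow> ('k \<Rightarrow> 'b::{ring,monoid_mult} \<Rightarrow> 'b) \<Rightarrow>
   ('k \<Rightarrow> 't::ab_group_add \<Rightarrow> 't) \<Rightarrow> ('a \<Rightarrow> 'b \<Rightarrow> 't) \<Rightarrow>
   ('k \<Rightarrow> 's::ab_group_add \<Rightarrow> 's) \<Rightarrow> ('b \<Rightarrow> 'a \<Rightarrow> 's) \<Rightarrow> ('s \<Rightarrow> 't) \<Rightarrow> bool" where
  "twisting_map sa sb st tp ss tpBA \<tau> \<longleftrightarrow>
     Vector_Spaces.linear ss st \<tau> \<and>
     (\<forall>m. twisted_mult sa sb st tp tpBA \<tau> m \<longrightarrow>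
        (\<forall>x y z. m (m x y) z = m x (m y z)) \<and>
        (\<forall>x. m (tp 1 1) x = x \<and> m x (tp 1 1) = x))"

definition alg_ideal :: "('k::field \<Rightarrow> 'v::ab_group_add \<Rightarrow> 'v) \<Rightarrow> ('v \<Rightarrow> 'v \<Rightarrow> 'v) \<Rightarrow> 'v set \<Rightarrow> bool" where
  "alg_ideal sc mult I \<longleftrightarrow> module.subspace sc I \<and>
     (\<forall>x i. i \<in> I \<longrightarrow> mult x i \<in> I \<and> mult i x \<in> I)"

definition cofinite_ideal :: "('k::field \<Rightarrow> 'v::ab_group_add \<Rightarrow> 'v) \<Rightarrow> ('v \<Rightarrow> 'v \<Rightarrow> 'v) \<Rightarrow> 'v set \<Rightarrow> bool" where
  "cofinite_ideal sc mult I \<longleftrightarrow> alg_ideal sc mult I \<and>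
     (\<exists>S. finite S \<and> module.span sc (S \<union> I) = UNIV)"

definition cofinite_open_subspace :: "('k::field \<Rightarrow> 'v::ab_group_add \<Rightarrow> 'v) \<Rightarrow> ('v \<Rightarrow> 'v \<Rightarrow> 'v) \<Rightarrow> 'v set \<Rightarrow> bool" where
  "cofinite_open_subspace sc mult U \<longleftrightarrow> module.subspace sc U \<and> (\<exists>I. cofinite_ideal sc mult I \<and> I \<subseteq> U)"

definition lin_open :: "('v::ab_group_add set \<Rightarrow> bool) \<Rightarrow> 'v set \<Rightarrow> bool" where
  "lin_open P U \<longleftrightarrow> (\<forall>x\<in>U. \<exists>V. P V \<and> (\<lambda>v. x + v) ` V \<subseteq> U)"

(* basic open subspaces E0 \<otimes> B + A \<otimes> F0 of A \<otimes>^! B *)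
definition bang_basic :: "('k::field \<Rightarrow> 'a::{ring,monoid_mult} \<Rightarrow> 'a) \<Rightarrow> ('k \<Rightarrow> 'b::{ring,monoid_mult} \<Rightarrow> 'b) \<Rightarrow>
   ('k \<Rightarrow> 't::ab_group_add \<Rightarrow> 't) \<Rightarrow> ('a \<Rightarrow> 'b \<Rightarrow> 't) \<Rightarrow> 't set \<Rightarrow> bool" where
  "bang_basic sa sb st tp W \<longleftrightarrow>
     (\<exists>E0 F0. cofinite_open_subspace sa (*) E0 \<and> cofinite_open_subspace sb (*) F0 \<and>
        W = module.span st ({tp x y | x y. x \<in> E0} \<union> {tp x y | x y. y \<in> F0}))"

end

theory Submission
  imports Defs
begin

text \<open>The unit laws of the twisted product force \<open>\<tau>(1 \<otimes> a) = a \<otimes> 1\<close> and \<open>\<tau>(b \<otimes> 1) = 1 \<otimes> b\<close>,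
  so \<open>a \<mapsto> a \<otimes> 1\<close> and \<open>b \<mapsto> 1 \<otimes> b\<close> are multiplicative and \<open>a \<otimes> b = (a \<otimes> 1)(1 \<otimes> b)\<close>.
  Hence for an ideal \<open>I\<close> of finite codimension in \<open>A \<otimes>\<^sub>\<tau> B\<close> the preimages \<open>E\<^sub>0\<close>, \<open>F\<^sub>0\<close> of \<open>I\<close>
  in \<open>A\<close> and \<open>B\<close> are ideals, of finite codimension since linear preimages preserve finite
  codimension, and \<open>E\<^sub>0 \<otimes> B + A \<otimes> F\<^sub>0 \<subseteq> I\<close>.\<close>

definition finite_codim :: "('k::field \<Rightarrow> 'v::ab_group_add \<Rightarrow> 'v) \<Rightarrow> 'v set \<Rightarrow> bool" where
  "finite_codim sc U \<longleftrightarrow> (\<exists>S. finite S \<and> module.span sc (S \<union> U) = UNIV)"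

lemma cofinite_ideal_iff: "cofinite_ideal sc mult I \<longleftrightarrow> alg_ideal sc mult I \<and> finite_codim sc I"
  unfolding cofinite_ideal_def finite_codim_def ..

lemma linear_vimage_span_insert:
  fixes s1 :: "'k::field \<Rightarrow> 'v::ab_group_add \<Rightarrow> 'v" and s2 :: "'k \<Rightarrow> 'w::ab_group_add \<Rightarrow> 'w"
  assumes "Vector_Spaces.linear s1 s2 f" and I: "module.subspace s2 I"
  shows "\<exists>v0. f -` module.span s2 (insert s I) \<subseteq> module.span s1 (insert v0 (f -` I))"
proof -
  interpret L: linear s1 s2 f by fact
  have span_I: "L.vs2.span I = I" using I by simp
  show ?thesis
  proof (cases "\<exists>v0. f v0 \<in> L.vs2.span (insert s I) \<and> f v0 \<notin> I")
    case False
    then have "f -` L.vs2.span (insert s I) \<subseteq> f -` I" by blast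
    then show ?thesis using L.vs1.span_superset by blast
  next
    case True
    then obtain v0 c0 where v0: "f v0 - s2 c0 s \<in> I" "f v0 \<notin> I"
      unfolding L.vs2.span_insert span_I by blast
    have "c0 \<noteq> 0" using v0 by auto
    have "v \<in> L.vs1.span (insert v0 (f -` I))" if "v \<in> f -` L.vs2.span (insert s I)" for v
    proof -
      from that obtain c where c: "f v - s2 c s \<in> I"
        unfolding L.vs2.span_insert span_I by blast
      \<comment> \<open>the multiple of \<open>v0\<close> cancels the \<open>s\<close>-component of \<open>f v\<close>\<close>
      have "f v - s2 c s - s2 (c / c0) (f v0 - s2 c0 s) = f (v - s1 (c / c0) v0)"
        using \<open>c0 \<noteq> 0\<close> by (simp add: L.diff L.scale L.vs2.scale_right_diff_distrib)
      moreover have "f v - s2 c s - s2 (c / c0) (f v0 - s2 c0 s) \<in> I"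
        using c v0(1) I L.vs2.subspace_diff L.vs2.subspace_scale by blast
      ultimately have "v - s1 (c / c0) v0 \<in> L.vs1.span (f -` I)"
        by (simp add: L.vs1.span_base)
      then show ?thesis unfolding L.vs1.span_insert by blast
    qed
    then show ?thesis by blast
  qed
qed

lemma linear_vimage_finite_codim_relative:
  fixes s1 :: "'k::field \<Rightarrow> 'v::ab_group_add \<Rightarrow> 'v" and s2 :: "'k \<Rightarrow> 'w::ab_group_add \<Rightarrow> 'w"
  assumes lin: "Vector_Spaces.linear s1 s2 f" and "finite S"
    and "module.subspace s2 I" and "range f \<subseteq> module.span s2 (S \<union> I)"
  shows "finite_codim s1 (f -` I)"
  using assms(2-)
proof (induction S arbitrary: I rule: finite_induct)
  interpret L: linear s1 s2 f by fact
  case (empty I)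
  then have "L.vs2.span I = I" by simp
  with empty have "f -` I = UNIV" by auto
  then show ?case unfolding finite_codim_def by auto
next
  interpret L: linear s1 s2 f by fact
  case (insert s S I)
  define I' where "I' = L.vs2.span (insert s I)"
  have "insert s S \<union> I \<subseteq> L.vs2.span (S \<union> I')"
    unfolding I'_def by (auto intro: L.vs2.span_base L.vs2.span_superset[THEN subsetD])
  then have "L.vs2.span (insert s S \<union> I) \<subseteq> L.vs2.span (S \<union> I')"
    by (simp add: L.vs2.span_minimal)
  with insert.prems(2) have "range f \<subseteq> L.vs2.span (S \<union> I')" by blast
  moreover have "L.vs2.subspace I'" unfolding I'_def by simp
  ultimately obtain S' where "finite S'" and S': "L.vs1.span (S' \<union> f -` I') = UNIV"
    using insert.IH unfolding finite_codim_def by blast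
  obtain v0 where v0: "f -` I' \<subseteq> L.vs1.span (insert v0 (f -` I))"
    using linear_vimage_span_insert[OF lin insert.prems(1)] unfolding I'_def by blast
  have "S' \<union> f -` I' \<subseteq> L.vs1.span (insert v0 S' \<union> f -` I)"
    using v0 L.vs1.span_mono[of "insert v0 (f -` I)" "insert v0 S' \<union> f -` I"]
      L.vs1.span_superset[of "insert v0 S' \<union> f -` I"] by auto
  then have "L.vs1.span (S' \<union> f -` I') \<subseteq> L.vs1.span (insert v0 S' \<union> f -` I)"
    by (simp add: L.vs1.span_minimal)
  then show ?case unfolding finite_codim_def using S' \<open>finite S'\<close>
    by (intro exI[of _ "insert v0 S'"]) auto
qed

lemma linear_vimage_finite_codim:
  fixes s1 :: "'k::field \<Rightarrow> 'v::ab_group_add \<Rightarrow> 'v" and s2 :: "'k \<Rightarrow> 'w::ab_group_add \<Rightarrow> 'w"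
  assumes "Vector_Spaces.linear s1 s2 f" and "module.subspace s2 I" and "finite_codim s2 I"
  shows "finite_codim s1 (f -` I)"
  using assms linear_vimage_finite_codim_relative unfolding finite_codim_def by (metis top_greatest)

lemma cofinite_ideal_vimage:
  fixes s1 :: "'k::field \<Rightarrow> 'v::ab_group_add \<Rightarrow> 'v" and s2 :: "'k \<Rightarrow> 'w::ab_group_add \<Rightarrow> 'w"
  assumes lin: "Vector_Spaces.linear s1 s2 f"
    and mult: "\<And>x y. f (mult1 x y) = mult2 (f x) (f y)"
    and I: "cofinite_ideal s2 mult2 I"
  shows "cofinite_ideal s1 mult1 (f -` I)"
proof -
  have sub: "module.subspace s2 I" and ideal: "\<And>x i. i \<in> I \<Longrightarrow> mult2 x i \<in> I \<and> mult2 i x \<in> I"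
    using I unfolding cofinite_ideal_def alg_ideal_def by auto
  have "module.subspace s1 (f -` I)"
    using module_hom.subspace_vimage[OF lin[unfolded linear_iff_module_hom] sub] .
  moreover have "finite_codim s1 (f -` I)"
    using linear_vimage_finite_codim[OF lin sub] I by (simp add: cofinite_ideal_iff)
  ultimately show ?thesis
    unfolding cofinite_ideal_iff alg_ideal_def by (simp add: mult ideal)
qed

lemma vector_space_field_mult: "vector_space ((*) :: 'k::field \<Rightarrow> 'k \<Rightarrow> 'k)"
  by unfold_locales (auto simp: algebra_simps)

lemma linear_functional_nonzero:
  fixes sc :: "'k::field \<Rightarrow> 'c::ab_group_add \<Rightarrow> 'c"
  assumes "vector_space sc" and "c \<noteq> 0"
  shows "\<exists>\<phi>. Vector_Spaces.linear sc (*) \<phi> \<and> \<phi> c \<noteq> 0"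
proof -
  interpret P: vector_space_pair sc "(*) :: 'k \<Rightarrow> 'k \<Rightarrow> 'k"
    using assms(1) vector_space_field_mult by (simp add: vector_space_pair_def)
  have "P.vs1.independent {c}" using assms(2) by simp
  from P.linear_independent_extend[OF this, of "\<lambda>_. 1"] show ?thesis by force
qed

lemma bilin_linear_compose:
  assumes "bilin s1 s2 s3 \<beta>" and "Vector_Spaces.linear s3 s4 g"
  shows "bilin s1 s2 s4 (\<lambda>x y. g (\<beta> x y))"
proof -
  have g_comp: "Vector_Spaces.linear s s4 (\<lambda>x. g (f x))" if "Vector_Spaces.linear s s3 f" for s f
    using Vector_Spaces.linear_compose[OF that assms(2)] by (simp add: o_def)
  show ?thesis using assms(1) unfolding bilin_def by (simp add: g_comp)
qed

lemma bilin_compose_linear: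
  assumes "bilin s1' s2' s3 \<beta>" and "Vector_Spaces.linear s1 s1' f" and "Vector_Spaces.linear s2 s2' g"
  shows "bilin s1 s2 s3 (\<lambda>x y. \<beta> (f x) (g y))"
proof -
  have "Vector_Spaces.linear s1 s3 (\<lambda>x. \<beta> (f x) y)" for y
    using Vector_Spaces.linear_compose[OF assms(2), of s3 "\<lambda>x. \<beta> x y"] assms(1)
    by (simp add: bilin_def o_def)
  moreover have "Vector_Spaces.linear s2 s3 (\<lambda>y. \<beta> (f x) (g y))" for x
    using Vector_Spaces.linear_compose[OF assms(3), of s3 "\<beta> (f x)"] assms(1)
    by (simp add: bilin_def o_def)
  ultimately show ?thesis unfolding bilin_def by blast
qed

lemma tensor_product_linear_eq:
  assumes T: "is_tensor_product sa sb st tp" and "vector_space sc"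
    and "Vector_Spaces.linear st sc h1" and "Vector_Spaces.linear st sc h2"
    and "\<And>x y. h1 (tp x y) = h2 (tp x y)"
  shows "h1 = h2"
proof
  fix t
  have "vector_space st" and span: "module.span st {tp x y | x y. True} = UNIV"
    using T unfolding is_tensor_product_def by auto
  then interpret P: vector_space_pair st sc using assms(2) by (simp add: vector_space_pair_def)
  show "h1 t = h2 t"
    by (rule P.linear_eq_on[OF assms(3,4), of t "{tp x y | x y. True}"]) (use span assms(5) in auto)
qed

text \<open>The definition of \<open>is_tensor_product\<close> only factors scalar bilinear forms; for a bilinear map
  into an arbitrary space, define the linear map on a basis of pure tensors and check it on all pure
  tensors after composing with an arbitrary linear functional.\<close>

lemma tensor_product_lift:
  fixes sc :: "'k::field \<Rightarrow> 'c::ab_group_add \<Rightarrow> 'c"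
  assumes T: "is_tensor_product sa sb st tp" and "vector_space sc" and bl: "bilin sa sb sc \<beta>"
  shows "\<exists>h. Vector_Spaces.linear st sc h \<and> (\<forall>x y. h (tp x y) = \<beta> x y)"
proof -
  have "vector_space st" and span: "module.span st {tp x y | x y. True} = UNIV"
    and factor: "\<And>f :: 'a \<Rightarrow> 'b \<Rightarrow> 'k. bilin sa sb (*) f \<Longrightarrow>
        \<exists>g. Vector_Spaces.linear st (*) g \<and> (\<forall>x y. g (tp x y) = f x y)"
    using T unfolding is_tensor_product_def by auto
  interpret P: vector_space_pair st sc using \<open>vector_space st\<close> assms(2) by (simp add: vector_space_pair_def)
  interpret Q: vector_space_pair st "(*) :: 'k \<Rightarrow> 'k \<Rightarrow> 'k"
    using \<open>vector_space st\<close> vector_space_field_mult by (simp add: vector_space_pair_def)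
  obtain B where B: "B \<subseteq> {tp x y | x y. True}" "P.vs1.independent B"
    and span_B: "{tp x y | x y. True} \<subseteq> P.vs1.span B"
    using P.vs1.maximal_independent_subset by blast
  have "P.vs1.span B = UNIV"
    using span P.vs1.span_minimal[OF span_B] by auto
  have "\<forall>b\<in>B. \<exists>p. b = tp (fst p) (snd p)" using B(1) by fastforce
  then obtain p where p: "\<And>b. b \<in> B \<Longrightarrow> b = tp (fst (p b)) (snd (p b))" by metis
  obtain h where h: "Vector_Spaces.linear st sc h" and hB: "\<And>b. b \<in> B \<Longrightarrow> h b = \<beta> (fst (p b)) (snd (p b))"
    using P.linear_independent_extend[OF B(2), of "\<lambda>b. \<beta> (fst (p b)) (snd (p b))"] by blast
  have "h (tp x y) = \<beta> x y" for x y
  proof (rule ccontr)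
    assume "h (tp x y) \<noteq> \<beta> x y"
    then obtain \<phi> where \<phi>: "Vector_Spaces.linear sc (*) \<phi>" and ne: "\<phi> (h (tp x y) - \<beta> x y) \<noteq> 0"
      using linear_functional_nonzero[OF assms(2), of "h (tp x y) - \<beta> x y"] by auto
    obtain \<psi> where \<psi>: "Vector_Spaces.linear st (*) \<psi>" and \<psi>_tp: "\<And>x y. \<psi> (tp x y) = \<phi> (\<beta> x y)"
      using factor[OF bilin_linear_compose[OF bl \<phi>]] by blast
    have \<phi>h: "(\<phi> \<circ> h) t = \<psi> t" for t
    proof (rule Q.linear_eq_on[OF Vector_Spaces.linear_compose[OF h \<phi>] \<psi>])
      show "t \<in> P.vs1.span B" using \<open>P.vs1.span B = UNIV\<close> by simp
    next
      fix b assume "b \<in> B"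
      then show "(\<phi> \<circ> h) b = \<psi> b" using hB \<psi>_tp p by (metis comp_apply)
    qed
    interpret \<Phi>: linear sc "(*)" \<phi> by fact
    from \<phi>h[of "tp x y"] ne \<psi>_tp show False by (simp add: \<Phi>.diff)
  qed
  with h show ?thesis by blast
qed

lemma tensor_map_unique:
  assumes T: "is_tensor_product sa sb st tp" and h: "Vector_Spaces.linear st st h"
    and h_tp: "\<And>x y. h (tp x y) = tp (f x) (g y)"
  shows "tensor_map st tp f g = h"
  unfolding tensor_map_def
proof (rule the_equality)
  show "Vector_Spaces.linear st st h \<and> (\<forall>x y. h (tp x y) = tp (f x) (g y))" using h h_tp by blast
next
  have "vector_space st" using T unfolding is_tensor_product_def by blast
  fix h' assume "Vector_Spaces.linear st st h' \<and> (\<forall>x y. h' (tp x y) = tp (f x) (g y))"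
  then show "h' = h" using tensor_product_linear_eq[OF T \<open>vector_space st\<close> _ h] h_tp by auto
qed

lemma tensor_map_id: "is_tensor_product sa sb st tp \<Longrightarrow> tensor_map st tp id id = id"
  by (rule tensor_map_unique) (auto simp: is_tensor_product_def linear_iff)

lemma tensor_map_tp:
  assumes T: "is_tensor_product sa sb st tp"
    and "Vector_Spaces.linear sa sa f" and "Vector_Spaces.linear sb sb g"
  shows "tensor_map st tp f g (tp x y) = tp (f x) (g y)"
proof -
  have "vector_space st" and "bilin sa sb st tp" using T unfolding is_tensor_product_def by auto
  then obtain h where "Vector_Spaces.linear st st h" and "\<forall>x y. h (tp x y) = tp (f x) (g y)"
    using tensor_product_lift[OF T _ bilin_compose_linear[OF _ assms(2,3)]] by blast
  then show ?thesis using tensor_map_unique[OF T] by auto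
qed

lemma k_algebra_linear_mult_left: "k_algebra sc \<Longrightarrow> Vector_Spaces.linear sc sc (\<lambda>x. a * x)"
  unfolding k_algebra_def linear_iff by (simp add: distrib_left) metis

lemma k_algebra_linear_mult_right: "k_algebra sc \<Longrightarrow> Vector_Spaces.linear sc sc (\<lambda>x. x * a)"
  unfolding k_algebra_def linear_iff by (simp add: distrib_right)

locale unital_twisted_tensor =
  fixes sa :: "'k::field \<Rightarrow> 'a::{ring,monoid_mult} \<Rightarrow> 'a"
    and sb :: "'k \<Rightarrow> 'b::{ring,monoid_mult} \<Rightarrow> 'b"
    and st :: "'k \<Rightarrow> 't::ab_group_add \<Rightarrow> 't"
    and tp :: "'a \<Rightarrow> 'b \<Rightarrow> 't"
    and tpBA :: "'b \<Rightarrow> 'a \<Rightarrow> 's"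
    and \<tau> :: "'s \<Rightarrow> 't"
    and m :: "'t \<Rightarrow> 't \<Rightarrow> 't"
  assumes k_algebra_A: "k_algebra sa" and k_algebra_B: "k_algebra sb"
    and tensor_product: "is_tensor_product sa sb st tp"
    and mult: "twisted_mult sa sb st tp tpBA \<tau> m"
    and mult_one_left: "m (tp 1 1) x = x" and mult_one_right: "m x (tp 1 1) = x"
begin

lemma mult_tp: "m (tp a b) (tp a' b') = tensor_map st tp (\<lambda>x. a * x) (\<lambda>y. y * b') (\<tau> (tpBA b a'))"
  using mult unfolding twisted_mult_def by blast

lemma tau_one_left: "\<tau> (tpBA 1 a) = tp a 1"
  using mult_one_left[of "tp a 1"] tensor_map_id[OF tensor_product] by (simp add: mult_tp id_def)

lemma tau_one_right: "\<tau> (tpBA b 1) = tp 1 b"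
  using mult_one_right[of "tp 1 b"] tensor_map_id[OF tensor_product] by (simp add: mult_tp id_def)

lemma mult_tp_one_left: "m (tp a 1) (tp a' b') = tp (a * a') b'"
  by (simp add: mult_tp tau_one_left tensor_map_tp[OF tensor_product]
      k_algebra_linear_mult_left[OF k_algebra_A] k_algebra_linear_mult_right[OF k_algebra_B])

lemma mult_tp_one_right: "m (tp a b) (tp 1 b') = tp a (b * b')"
  by (simp add: mult_tp tau_one_right tensor_map_tp[OF tensor_product]
      k_algebra_linear_mult_left[OF k_algebra_A] k_algebra_linear_mult_right[OF k_algebra_B])

lemma tp_eq_mult: "tp a b = m (tp a 1) (tp 1 b)"
  by (simp add: mult_tp_one_left)

lemma cofinite_ideal_vimage_left:
  "cofinite_ideal st m I \<Longrightarrow> cofinite_ideal sa (*) ((\<lambda>a. tp a 1) -` I)"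
  using tensor_product
  by (intro cofinite_ideal_vimage) (auto simp: is_tensor_product_def bilin_def mult_tp_one_left)

lemma cofinite_ideal_vimage_right:
  "cofinite_ideal st m I \<Longrightarrow> cofinite_ideal sb (*) (tp 1 -` I)"
  using tensor_product
  by (intro cofinite_ideal_vimage) (auto simp: is_tensor_product_def bilin_def mult_tp_one_right)

lemma bang_basic_subset_cofinite_ideal:
  assumes I: "cofinite_ideal st m I"
  shows "\<exists>W. bang_basic sa sb st tp W \<and> W \<subseteq> I"
proof -
  define E0 where "E0 = (\<lambda>a. tp a 1) -` I"
  define F0 where "F0 = tp 1 -` I"
  have open_E0: "cofinite_open_subspace sa (*) E0" and open_F0: "cofinite_open_subspace sb (*) F0"
    unfolding cofinite_open_subspace_def E0_def F0_def
    using cofinite_ideal_vimage_left[OF I] cofinite_ideal_vimage_right[OF I]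
    by (auto simp: cofinite_ideal_def alg_ideal_def)
  interpret T: vector_space st using tensor_product by (simp add: is_tensor_product_def)
  have "T.span ({tp x y | x y. x \<in> E0} \<union> {tp x y | x y. y \<in> F0}) \<subseteq> I"
  proof (rule T.span_minimal)
    show "T.subspace I" using I by (simp add: cofinite_ideal_def alg_ideal_def)
    have ideal: "m x i \<in> I \<and> m i x \<in> I" if "i \<in> I" for x i
      using I that unfolding cofinite_ideal_def alg_ideal_def by blast
    show "{tp x y | x y. x \<in> E0} \<union> {tp x y | x y. y \<in> F0} \<subseteq> I"
    proof safe
      fix x y
      show "x \<in> E0 \<Longrightarrow> tp x y \<in> I" "y \<in> F0 \<Longrightarrow> tp x y \<in> I"
        unfolding E0_def F0_def tp_eq_mult[of x y] using ideal by auto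
    qed
  qed
  with open_E0 open_F0 show ?thesis unfolding bang_basic_def by blast
qed

end

lemma lin_open_finer:
  assumes "\<And>V. P V \<Longrightarrow> \<exists>W. Q W \<and> W \<subseteq> V" and "lin_open P U"
  shows "lin_open Q U"
  using assms unfolding lin_open_def by (meson image_mono order_trans)

theorem lemma3p3:
  fixes sa :: "'k::field \<Rightarrow> 'a::{ring,monoid_mult} \<Rightarrow> 'a"
    and sb :: "'k \<Rightarrow> 'b::{ring,monoid_mult} \<Rightarrow> 'b"
    and st :: "'k \<Rightarrow> 't::ab_group_add \<Rightarrow> 't"
    and ss :: "'k \<Rightarrow> 's::ab_group_add \<Rightarrow> 's"
    and tp :: "'a \<Rightarrow> 'b \<Rightarrow> 't"
    and tpBA :: "'b \<Rightarrow> 'a \<Rightarrow> 's"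
    and \<tau> :: "'s \<Rightarrow> 't"
    and m :: "'t \<Rightarrow> 't \<Rightarrow> 't"
  assumes "k_algebra sa" and "k_algebra sb"
    and "is_tensor_product sa sb st tp"
    and "is_tensor_product sb sa ss tpBA"
    and "twisting_map sa sb st tp ss tpBA \<tau>"
    and "twisted_mult sa sb st tp tpBA \<tau> m"
  shows "\<forall>U. lin_open (cofinite_ideal st m) U \<longrightarrow> lin_open (bang_basic sa sb st tp) U"
proof -
  interpret unital_twisted_tensor sa sb st tp tpBA \<tau> m
    using assms(1-3,5,6) unfolding twisting_map_def by unfold_locales blast+
  show ?thesis using lin_open_finer bang_basic_subset_cofinite_ideal by blast
qed

end
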